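(* For $n\geq1$ let $\ell_n=\sqrt[n]{n!}$ and $x_n=\log(\ell_{n+1}/\ell_n)$. Then for every integer $n\geq 271$, $$0\leq x_{n+1}+x_n\leq \frac2n-\frac{\log n}{n^2}-\frac{15/16+\log(2\pi)}{n^2}\leq\frac2n.$$
   Context: $\log$ denotes the natural logarithm. *)

theory Defs
  imports Complex_Main
begin

definition ell :: "nat \<Rightarrow> real" where
  "ell n = root n (fact n)"

definition xseq :: "nat \<Rightarrow> real" where
  "xseq n = ln (ell (n + 1) / ell n)"

end

theory Submission
  imports Defs "HOL-Analysis.Gamma_Function" "HOL-Real_Asymp.Real_Asymp"
begin

text \<open>
  With \<open>A n = ln n!\<close> one has \<open>xseq n = A (n+1) / (n+1) - A n / n\<close>, so
  \<open>xseq (n+1) + xseq n = (n (ln (n+1) + ln (n+2)) - 2 A n) / (n (n+2))\<close>.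
  Nonnegativity follows from \<open>n! \<le> n^n\<close>. The upper bound rests on Stirling's lower estimate
  \<open>A n \<ge> (n + 1/2) ln n - n + ln (2 pi) / 2\<close>: the remainder \<open>ln n! - (n + 1/2) ln n + n\<close>
  decreases (Pade bound for \<open>ln (1+x)\<close>), is bounded below, and its limit is identified as
  \<open>ln (2 pi) / 2\<close> through Wallis' product. With the cubic Taylor bound for \<open>ln (1+x)\<close>
  the claim reduces to \<open>2 ln n + 2 ln (2 pi) + 3/n \<le> n/16 + 5/8\<close>, true for \<open>n \<ge> 271\<close>.
\<close>

lemma ln_add_one_le_cubic:
  fixes x :: real
  assumes "0 \<le> x"
  shows "ln (1 + x) \<le> x - x^2/2 + x^3/3"
proof -
  let ?f = "\<lambda>t::real. t - t^2/2 + t^3/3 - ln (1 + t)"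
  have "?f 0 \<le> ?f x"
  proof (rule DERIV_nonneg_imp_nondecreasing[OF assms])
    fix t :: real
    assume t: "0 \<le> t" "t \<le> x"
    have "DERIV ?f t :> 1 - t + t^2 - 1/(1 + t)"
      using t by (auto intro!: derivative_eq_intros simp: power2_eq_square field_simps)
    moreover have "1 - t + t^2 - 1/(1 + t) = t^3/(1 + t)"
      using t by (simp add: field_simps power2_eq_square power3_eq_cube)
    ultimately show "\<exists>y. DERIV ?f t :> y \<and> y \<ge> 0"
      using t by auto
  qed
  then show ?thesis by simp
qed

lemma ln_add_one_ge_pade:
  fixes x :: real
  assumes "0 \<le> x"
  shows "2*x/(2 + x) \<le> ln (1 + x)"
proof -
  let ?f = "\<lambda>t::real. ln (1 + t) - 2*t/(2 + t)"
  have "?f 0 \<le> ?f x"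
  proof (rule DERIV_nonneg_imp_nondecreasing[OF assms])
    fix t :: real
    assume t: "0 \<le> t" "t \<le> x"
    have "DERIV ?f t :> 1/(1 + t) - 4/(2 + t)^2"
      using t by (auto intro!: derivative_eq_intros simp: power2_eq_square)
    moreover have "1 + t \<noteq> 0" "(2 + t)^2 \<noteq> 0"
      using t by auto
    then have "1/(1 + t) - 4/(2 + t)^2 = t^2/((1 + t) * (2 + t)^2)"
      by (simp add: field_simps) (simp add: power2_eq_square algebra_simps)
    ultimately show "\<exists>y. DERIV ?f t :> y \<and> y \<ge> 0"
      using t by auto
  qed
  then show ?thesis by simp
qed

lemma mult_ln_add_one_div_le:
  fixes c N :: real
  assumes "0 \<le> c" "0 < N"
  shows "N * ln (1 + c/N) \<le> c - c^2/(2*N) + c^3/(3*N^2)"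
proof -
  have "N * ln (1 + c/N) \<le> N * (c/N - (c/N)^2/2 + (c/N)^3/3)"
    using assms ln_add_one_le_cubic[of "c/N"] by (intro mult_left_mono) auto
  also have "\<dots> = c - c^2/(2*N) + c^3/(3*N^2)"
    using assms by (simp add: field_simps power2_eq_square power3_eq_cube)
  finally show ?thesis .
qed

lemma ln_fact_le: "ln (fact n :: real) \<le> real n * ln (real n)"
proof (cases "n = 0")
  case False
  have "(fact n :: real) \<le> real n ^ n"
    using fact_le_power[of n, where 'a = real] by simp
  then have "ln (fact n :: real) \<le> ln (real n ^ n)"
    using False by (intro ln_mono) auto
  then show ?thesis
    using False by (simp add: ln_realpow)
qed simp

definition stirling_remainder :: "nat \<Rightarrow> real" where
  "stirling_remainder n = ln (fact n) - (real n + 1/2) * ln (real n) + real n"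

lemma stirling_remainder_diff:
  assumes "n \<ge> 1"
  shows "stirling_remainder n - stirling_remainder (Suc n) = (real n + 1/2) * ln (1 + 1/real n) - 1"
proof -
  have "1 + 1/real n = (real n + 1)/real n"
    using assms by (simp add: field_simps)
  then have ln_ratio: "ln (1 + 1/real n) = ln (real n + 1) - ln (real n)"
    using assms by (simp add: ln_div)
  have ln_fact: "ln (fact (Suc n) :: real) = ln (real n + 1) + ln (fact n)"
    by (simp add: ln_mult add.commute)
  show ?thesis
    unfolding stirling_remainder_def ln_ratio ln_fact by (simp add: algebra_simps)
qed

lemma stirling_remainder_Suc_le:
  assumes "n \<ge> 1"
  shows "stirling_remainder (Suc n) \<le> stirling_remainder n"
proof -
  have "1/(real n + 1/2) = 2*(1/real n)/(2 + 1/real n)"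
    using assms by (simp add: field_simps)
  also have "\<dots> \<le> ln (1 + 1/real n)"
    by (rule ln_add_one_ge_pade) simp
  finally have "1 \<le> (real n + 1/2) * ln (1 + 1/real n)"
    by (simp add: field_simps)
  then show ?thesis
    using stirling_remainder_diff[OF assms] by simp
qed

lemma stirling_remainder_antimono:
  assumes "1 \<le> n" "n \<le> m"
  shows "stirling_remainder m \<le> stirling_remainder n"
  using assms(2)
proof (induction rule: dec_induct)
  case (step k)
  with assms(1) show ?case
    using stirling_remainder_Suc_le[of k] by simp
qed simp

lemma stirling_remainder_diff_le:
  assumes "n \<ge> 1"
  shows "stirling_remainder n - stirling_remainder (Suc n) \<le> 1/(2*real n) - 1/(2*(real n + 1))"
proof -
  define x where "x = 1/real n"
  have n: "real n \<ge> 1"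
    using assms by simp
  have "(real n + 1/2) * ln (1 + x) \<le> (real n + 1/2) * (x - x^2/2 + x^3/3)"
    using ln_add_one_le_cubic[of x] by (intro mult_left_mono) (auto simp: x_def)
  also have "\<dots> = 1 + (real n + 2)/(12 * real n^3)"
    using n by (simp add: x_def field_simps power2_eq_square power3_eq_cube)
  also have "(real n + 2)/(12 * real n^3) \<le> 1/(2*real n*(real n + 1))"
  proof -
    have "(real n + 2) * (2*real n*(real n + 1)) \<le> 12 * real n^3"
    proof -
      have "real n \<le> real n * real n" "real n * real n \<le> real n * real n * real n"
        using n by (simp_all add: mult_le_cancel_left1)
      then show ?thesis
        by (simp add: algebra_simps power3_eq_cube)
    qed
    moreover have "0 < 12 * real n^3" "0 < 2*real n*(real n + 1)"
      using n by auto
    ultimately show ?thesis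
      by (simp add: frac_le_eq field_simps)
  qed
  also have "1/(2*real n*(real n + 1)) = 1/(2*real n) - 1/(2*(real n + 1))"
    using n by (simp add: field_simps)
  finally show ?thesis
    using stirling_remainder_diff[OF assms] by (simp add: x_def)
qed

lemma stirling_remainder_ge_half:
  assumes "n \<ge> 1"
  shows "1/2 + 1/(2*real n) \<le> stirling_remainder n"
  using assms
proof (induction rule: dec_induct)
  case base
  then show ?case by (simp add: stirling_remainder_def)
next
  case (step m)
  then show ?case
    using stirling_remainder_diff_le[of m] by (simp add: add.commute)
qed

lemma wallis_partial_product_eq:
  "(\<Prod>k=1..n. 4 * real k^2 / (4 * real k^2 - 1)) =
     (2^n * fact n)^4 / ((fact (2*n))^2 * (2 * real n + 1))"
proof (induction n)
  case 0
  then show ?case by simp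
next
  case (Suc n)
  have step: "a^4 / (b^2 * (2*m + 1)) * (4 * (m + 1)^2 / (4 * (m + 1)^2 - 1)) =
      (a * (2 * (m + 1)))^4 / ((b * (2*m + 1) * (2*m + 2))^2 * (2*m + 3))"
    if "b \<noteq> 0" "m \<ge> 0" for a b m :: real
  proof -
    have fac: "4 * (m + 1)^2 - 1 = (2*m + 1) * (2*m + 3)"
      by (simp add: power2_eq_square algebra_simps)
    have nz: "b^2 * (2*m + 1) * ((2*m + 1) * (2*m + 3)) \<noteq> 0"
      "(b * (2*m + 1) * (2*m + 2))^2 * (2*m + 3) \<noteq> 0"
      using that by auto
    show ?thesis
      unfolding fac times_divide_times_eq by (subst frac_eq_eq[OF nz]) algebra
  qed
  have fact_double: "fact (2 * Suc n) = (fact (2*n) :: real) * (2 * real n + 1) * (2 * real n + 2)"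
    by (simp add: algebra_simps)
  have pow_fact: "(2::real) ^ Suc n * fact (Suc n) = 2^n * fact n * (2 * (real n + 1))"
    by (simp add: algebra_simps)
  have odd: "2 * real (Suc n) + 1 = 2 * real n + 3"
    by simp
  have "(\<Prod>k=1..Suc n. 4 * real k^2 / (4 * real k^2 - 1)) =
      (\<Prod>k=1..n. 4 * real k^2 / (4 * real k^2 - 1)) * (4 * (real n + 1)^2 / (4 * (real n + 1)^2 - 1))"
    by (simp add: add.commute)
  also have "\<dots> = (2^Suc n * fact (Suc n))^4 / ((fact (2 * Suc n))^2 * (2 * real (Suc n) + 1))"
    unfolding Suc.IH fact_double pow_fact odd by (rule step) auto
  finally show ?case .
qed

lemma ln_wallis_partial_product:
  assumes "n \<ge> 1"
  shows "ln (\<Prod>k=1..n. 4 * real k^2 / (4 * real k^2 - 1)) =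
    - ln 2 + ln (real n) - ln (2 * real n + 1) + 4 * stirling_remainder n - 2 * stirling_remainder (2*n)"
proof -
  have "ln ((2^n * fact n)^4 / ((fact (2*n))^2 * (2 * real n + 1)) :: real) =
        4 * (real n * ln 2 + ln (fact n)) - 2 * ln (fact (2*n)) - ln (2 * real n + 1)"
    by (simp add: ln_div ln_mult ln_realpow)
  moreover have "ln (real (2*n)) = ln 2 + ln (real n)"
    using assms by (simp add: ln_mult)
  ultimately show ?thesis
    unfolding wallis_partial_product_eq stirling_remainder_def by (simp add: algebra_simps)
qed

lemma stirling_remainder_tendsto: "stirling_remainder \<longlonglongrightarrow> ln (2*pi) / 2"
proof -
  have "decseq (\<lambda>k. stirling_remainder (Suc k))"
    by (rule decseq_SucI) (simp add: stirling_remainder_Suc_le)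
  moreover have "\<forall>k. 1/2 \<le> stirling_remainder (Suc k)"
  proof
    fix k
    have "1/2 + 1/(2 * real (Suc k)) \<le> stirling_remainder (Suc k)"
      by (rule stirling_remainder_ge_half) simp
    moreover have "0 \<le> 1/(2 * real (Suc k))"
      by simp
    ultimately show "1/2 \<le> stirling_remainder (Suc k)"
      by linarith
  qed
  ultimately obtain C where "(\<lambda>k. stirling_remainder (Suc k)) \<longlonglongrightarrow> C"
    using decseq_convergent by blast
  then have lim: "stirling_remainder \<longlonglongrightarrow> C"
    by (rule LIMSEQ_imp_Suc)
  have "strict_mono (\<lambda>n::nat. 2*n)"
    by (rule strict_monoI) simp
  from LIMSEQ_subseq_LIMSEQ[OF lim this]
  have lim_double: "(\<lambda>n. stirling_remainder (2*n)) \<longlonglongrightarrow> C"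
    by (simp add: o_def)
  have "(\<lambda>n. ln (real n) - ln (2 * real n + 1)) \<longlonglongrightarrow> - ln 2"
    by real_asymp
  then have "(\<lambda>n. - ln 2 + (ln (real n) - ln (2 * real n + 1)) + 4 * stirling_remainder n
      - 2 * stirling_remainder (2*n)) \<longlonglongrightarrow> - ln 2 + - ln 2 + 4 * C - 2 * C"
    by (intro tendsto_intros lim lim_double)
  moreover have "\<forall>\<^sub>F n in sequentially.
      - ln 2 + (ln (real n) - ln (2 * real n + 1)) + 4 * stirling_remainder n - 2 * stirling_remainder (2*n)
      = ln (\<Prod>k=1..n. 4 * real k^2 / (4 * real k^2 - 1))"
    using eventually_ge_at_top[of 1] by eventually_elim (subst ln_wallis_partial_product, simp_all)
  ultimately have "(\<lambda>n. ln (\<Prod>k=1..n. 4 * real k^2 / (4 * real k^2 - 1)))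
      \<longlonglongrightarrow> - ln 2 + - ln 2 + 4 * C - 2 * C"
    by (rule Lim_transform_eventually)
  moreover have "(\<lambda>n. ln (\<Prod>k=1..n. 4 * real k^2 / (4 * real k^2 - 1))) \<longlonglongrightarrow> ln (pi / 2)"
    by (intro tendsto_intros wallis) simp
  ultimately have "ln (pi / 2) = - ln 2 + - ln 2 + 4 * C - 2 * C"
    using LIMSEQ_unique by blast
  then have "C = ln (2*pi) / 2"
    by (simp add: ln_div ln_mult)
  with lim show ?thesis
    by simp
qed

lemma ln_fact_ge_stirling:
  assumes "n \<ge> 1"
  shows "(real n + 1/2) * ln (real n) - real n + ln (2*pi) / 2 \<le> ln (fact n)"
proof -
  have "ln (2*pi) / 2 \<le> stirling_remainder n"
    using stirling_remainder_tendsto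
    by (rule LIMSEQ_le_const2) (use assms stirling_remainder_antimono in blast)
  then show ?thesis
    unfolding stirling_remainder_def by simp
qed

lemma xseq_eq_ln_fact:
  assumes "n > 0"
  shows "xseq n = ln (fact (Suc n)) / real (Suc n) - ln (fact n) / real n"
proof -
  have ln_ell: "ln (ell k) = ln (fact k) / real k" and ell_pos: "ell k > 0" if "k > 0" for k
    using that unfolding ell_def by (simp_all add: ln_root)
  have "ell (Suc n) > 0" "ell n > 0"
    using assms by (simp_all add: ell_pos)
  then have "xseq n = ln (ell (Suc n)) - ln (ell n)"
    unfolding xseq_def by (simp add: ln_div)
  with assms show ?thesis
    by (simp add: ln_ell del: of_nat_Suc fact_Suc)
qed

lemma xseq_nonneg:
  assumes "n > 0"
  shows "0 \<le> xseq n"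
proof -
  have "ln (fact n) \<le> real n * ln (real n)"
    by (rule ln_fact_le)
  also have "\<dots> \<le> real n * ln (real (Suc n))"
    using assms by (intro mult_left_mono) auto
  finally have "ln (fact n) / real n \<le> (ln (fact n) + ln (real (Suc n))) / real (Suc n)"
    using assms by (simp add: field_simps)
  also have "ln (fact n) + ln (real (Suc n)) = ln (fact (Suc n))"
    by (simp add: ln_mult)
  finally show ?thesis
    using xseq_eq_ln_fact[OF assms] by simp
qed

lemma twice_ln_plus_ln_2pi_le:
  fixes N :: real
  assumes "N \<ge> 271"
  shows "2 * ln N + 2 * ln (2*pi) + 3/N \<le> N/16 + 5/8"
proof -
  have "ln (N/271) \<le> N/271 - 1"
    using assms by (intro ln_le_minus_one) simp
  moreover have "ln (N/271) = ln N - ln 271"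
    using assms by (simp add: ln_div)
  moreover have "ln (271::real) \<le> ln (2^9)"
    by simp
  moreover have "ln (2*pi) \<le> ln (2^3)"
    using pi_less_4 by simp
  moreover have "ln ((2::real)^9) = 9 * ln 2" "ln ((2::real)^3) = 3 * ln 2"
    using ln_realpow[of 2 9] ln_realpow[of 2 3] by simp_all
  moreover have "3/N \<le> 3/271"
    using assms by (intro divide_left_mono) auto
  ultimately show ?thesis
    using assms ln2_le_25_over_36 by linarith
qed

lemma xseq_add_Suc_le:
  assumes "n \<ge> 271"
  shows "xseq (Suc n) + xseq n \<le>
    2 / real n - ln (real n) / (real n)^2 - (15/16 + ln (2 * pi)) / (real n)^2"
proof -
  define N where "N = real n"
  define L where "L = ln N"
  define A where "A = ln (fact n :: real)"
  define P where "P = ln (2*pi)"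
  have N: "N \<ge> 271"
    using assms by (simp add: N_def)
  have ln_shift: "ln (N + c) = L + ln (1 + c/N)" if "c \<ge> 0" for c
  proof -
    have "N + c = N * (1 + c/N)"
      using N by (simp add: field_simps)
    moreover have "1 + c/N > 0"
      using N that by (simp add: add_pos_nonneg)
    ultimately show ?thesis
      using N by (simp add: L_def ln_mult)
  qed
  have "ln (fact (Suc (Suc n)) :: real) = A + ln (N + 1) + ln (N + 2)"
    unfolding A_def N_def by (simp add: ln_mult add_ac)
  then have "xseq (Suc n) + xseq n = (A + ln (N + 1) + ln (N + 2)) / (N + 2) - A / N"
    using xseq_eq_ln_fact[of n] xseq_eq_ln_fact[of "Suc n"] assms
    by (simp add: A_def N_def add_ac)
  also have "\<dots> = (N * (ln (N + 1) + ln (N + 2)) - 2*A) / (N * (N + 2))"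
    using N by (simp add: field_simps)
  also have "\<dots> = (2*N*L + N * ln (1 + 1/N) + N * ln (1 + 2/N) - 2*A) / (N * (N + 2))"
    using ln_shift[of 1] ln_shift[of 2] by (simp add: algebra_simps)
  also have "\<dots> \<le> (2*N - L - P + 3 - 5/(2*N) + 3/N^2) / (N * (N + 2))"
  proof (rule divide_right_mono)
    have "(N + 1/2) * L - N + P/2 \<le> A"
      using ln_fact_ge_stirling[of n] assms by (simp add: A_def L_def N_def P_def)
    moreover have "N * ln (1 + 1/N) \<le> 1 - 1/(2*N) + 1/(3*N^2)"
      "N * ln (1 + 2/N) \<le> 2 - 2/N + 8/(3*N^2)"
      using mult_ln_add_one_div_le[of 1 N] mult_ln_add_one_div_le[of 2 N] N by simp_all
    ultimately show "2*N*L + N * ln (1 + 1/N) + N * ln (1 + 2/N) - 2*A \<le>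
        2*N - L - P + 3 - 5/(2*N) + 3/N^2"
      by (simp add: field_simps)
  qed (use N in simp)
  also have "\<dots> \<le> (2*N - L - (15/16 + P)) / N^2"
  proof -
    have "(2*N - L - P + 3 - 5/(2*N) + 3/N^2) * N = 2*N^2 - L*N - P*N + 3*N - 5/2 + 3/N"
      using N by (simp add: field_simps power2_eq_square)
    also have "\<dots> \<le> 2*N^2 - L*N - P*N + 49/16*N - 2*L - 2*P - 15/8"
      using twice_ln_plus_ln_2pi_le[OF N] by (simp add: L_def P_def)
    also have "\<dots> = (2*N - L - (15/16 + P)) * (N + 2)"
      by (simp add: field_simps power2_eq_square)
    finally have "(2*N - L - P + 3 - 5/(2*N) + 3/N^2) * N / (N^2 * (N + 2)) \<le>
        (2*N - L - (15/16 + P)) * (N + 2) / (N^2 * (N + 2))"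
      using N by (intro divide_right_mono) auto
    then show ?thesis
      using N by (simp add: power2_eq_square)
  qed
  also have "\<dots> = 2 / N - L / N^2 - (15/16 + P) / N^2"
    using N by (simp add: field_simps power2_eq_square)
  finally show ?thesis
    by (simp add: N_def L_def P_def)
qed

theorem mainTheorem9:
  fixes n :: nat
  assumes "n \<ge> 271"
  shows "0 \<le> xseq (n + 1) + xseq n
    \<and> xseq (n + 1) + xseq n \<le> 2 / real n - ln (real n) / (real n)^2
          - (15/16 + ln (2 * pi)) / (real n)^2
    \<and> 2 / real n - ln (real n) / (real n)^2
          - (15/16 + ln (2 * pi)) / (real n)^2 \<le> 2 / real n"
proof (intro conjI)
  show "0 \<le> xseq (n + 1) + xseq n"
    using assms xseq_nonneg[of n] xseq_nonneg[of "n + 1"] by simp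
  show "xseq (n + 1) + xseq n \<le> 2 / real n - ln (real n) / (real n)^2
      - (15/16 + ln (2 * pi)) / (real n)^2"
    using xseq_add_Suc_le[OF assms] by simp
  have "0 \<le> ln (real n) / (real n)^2" "0 \<le> (15/16 + ln (2 * pi)) / (real n)^2"
    using assms pi_ge_two by simp_all
  then show "2 / real n - ln (real n) / (real n)^2
      - (15/16 + ln (2 * pi)) / (real n)^2 \<le> 2 / real n"
    by simp
qed

end
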